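(* Let $d\ge 2$, let $\rho$ be a density operator on $\mathbb{C}^d$, and let $\{|i_m\rangle\}_{i=1}^d$, $m=1,\dots,M$, be $M$ mutually unbiased orthonormal bases of $\mathbb{C}^d$, with $p_{i_m}=\langle i_m|\rho|i_m\rangle$. Let $C>0$ be any number with $\sum_{m=1}^M\sum_{i=1}^d p_{i_m}^2\le C$ (for example $C=\operatorname{Tr}(\rho^2)+\frac{M-1}{d}$). Put $K=\lfloor M/C\rfloor$ and $a=M/C-K$. Then $$\sum_{m=1}^M H\{p_{i_m};i\}\ \ge\ aC(K+1)\log_2(K+1)+(1-a)CK\log_2K.$$
   Context: Orthonormal bases $\{|i_m\rangle\}_{i=1}^d$, $m=1,\dots,M$, of $\mathbb{C}^d$ are mutually unbiased if $|\langle i_m|j_n\rangle|^2=1/d$ for all $i,j$ and all $m\ne n$. $H\{p_{i_m};i\}=-\sum_{i=1}^d p_{i_m}\log_2 p_{i_m}$ is the Shannon entropy of the outcome distribution in the $m$th basis, with the convention $0\log_2 0=0$. *)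

theory Defs
  imports "HOL-Analysis.Analysis"
begin

text \<open>Vectors of \<open>\<complex>\<^sup>d\<close> are \<open>complex ^ 'n\<close> with \<open>d = CARD('n)\<close>;
  operators are \<open>complex ^ 'n ^ 'n\<close>.\<close>

definition cinner :: "complex ^ 'n \<Rightarrow> complex ^ 'n \<Rightarrow> complex" where
  "cinner x y = (\<Sum>j\<in>UNIV. cnj (x $ j) * y $ j)"

definition density_op :: "complex ^ 'n ^ 'n \<Rightarrow> bool" where
  "density_op \<rho> \<longleftrightarrow>
     (\<forall>i j. \<rho> $ i $ j = cnj (\<rho> $ j $ i)) \<and>
     (\<forall>v. 0 \<le> Re (cinner v (\<rho> *v v))) \<and>
     (\<Sum>i\<in>UNIV. \<rho> $ i $ i) = 1"

definition orthonormal_basis :: "('n \<Rightarrow> complex ^ 'n) \<Rightarrow> bool" where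
  "orthonormal_basis b \<longleftrightarrow>
     (\<forall>i j. cinner (b i) (b j) = (if i = j then 1 else 0))"

definition mutually_unbiased :: "nat \<Rightarrow> (nat \<Rightarrow> 'n \<Rightarrow> complex ^ 'n) \<Rightarrow> bool" where
  "mutually_unbiased M B \<longleftrightarrow>
     (\<forall>m<M. orthonormal_basis (B m)) \<and>
     (\<forall>m<M. \<forall>n<M. m \<noteq> n \<longrightarrow>
        (\<forall>i j. (cmod (cinner (B m i) (B n j)))\<^sup>2 = 1 / real CARD('n)))"

definition outcome_prob :: "complex ^ 'n ^ 'n \<Rightarrow> ('n \<Rightarrow> complex ^ 'n) \<Rightarrow> 'n \<Rightarrow> real" where
  "outcome_prob \<rho> b i = Re (cinner (b i) (\<rho> *v b i))"

definition shannon :: "('n::finite \<Rightarrow> real) \<Rightarrow> real" where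
  "shannon p = - (\<Sum>i\<in>UNIV. if p i = 0 then 0 else p i * log 2 (p i))"

end

theory Submission
  imports Defs "HOL-Real_Asymp.Real_Asymp"
begin

text \<open>For \<open>k \<ge> 1\<close> the entropy (in nats) of a probability vector is at least
  \<open>\<alpha>\<^sub>k - \<beta>\<^sub>k \<Sum>p\<^sub>i\<^sup>2\<close>, the secant of the (collision probability, entropy) region through the
  uniform distributions on \<open>k\<close> and \<open>k + 1\<close> points; equivalently \<open>\<Sum>h(p\<^sub>i) \<ge> 0\<close> for
  \<open>h(q) = q (-ln q + \<beta>\<^sub>k q - \<alpha>\<^sub>k)\<close>.  Two entries with sum at most \<open>1/\<beta>\<^sub>k\<close> may be merged,
  since \<open>h\<close> is subadditive there; once no such pair is left, all entries but at most one exceed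
  \<open>1/(2\<beta>\<^sub>k)\<close>, where \<open>h\<close> is convex, and Jensen's inequality reduces the claim to \<open>n\<close> equal
  entries plus one small entry, a one-variable inequality.  Summing over the bases with
  \<open>k = \<lfloor>M/C\<rfloor>\<close> gives \<open>(\<Sum>\<^sub>m H\<^sub>m) ln 2 \<ge> M \<alpha>\<^sub>k - \<beta>\<^sub>k C\<close>, which is the claimed bound
  times \<open>ln 2\<close>.\<close>

text \<open>\<open>secant_offset k = \<alpha>\<^sub>k\<close> and \<open>secant_slope k = \<beta>\<^sub>k\<close>: the line \<open>s \<mapsto> \<alpha>\<^sub>k - \<beta>\<^sub>k s\<close>
  passes through \<open>(1/k, ln k)\<close> and \<open>(1/(k+1), ln (k+1))\<close>; \<open>secant_excess k\<close> is \<open>h\<close>.\<close>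

definition secant_slope :: "real \<Rightarrow> real" where
  "secant_slope k = k * (k + 1) * (ln (k + 1) - ln k)"

definition secant_offset :: "real \<Rightarrow> real" where
  "secant_offset k = (k + 1) * ln (k + 1) - k * ln k"

definition secant_gap :: "real \<Rightarrow> real \<Rightarrow> real" where
  "secant_gap k q = - ln q + secant_slope k * q - secant_offset k"

definition secant_excess :: "real \<Rightarrow> real \<Rightarrow> real" where
  "secant_excess k q = q * secant_gap k q"

lemma ln_succ_diff_bounds:
  fixes k :: real
  assumes "k > 0"
  shows "1 / (k + 1) \<le> ln (k + 1) - ln k" and "ln (k + 1) - ln k \<le> 1 / k"
proof -
  have "ln ((k + 1) / k) \<le> (k + 1) / k - 1"
    using assms by (intro ln_le_minus_one) auto
  moreover have "(k + 1) / k - 1 = 1 / k"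
    using assms by (simp add: field_simps)
  ultimately show "ln (k + 1) - ln k \<le> 1 / k"
    using assms by (simp add: ln_div)
  have "ln (k / (k + 1)) \<le> k / (k + 1) - 1"
    using assms by (intro ln_le_minus_one) auto
  moreover have "k / (k + 1) - 1 = - (1 / (k + 1))"
    using assms by (simp add: field_simps)
  ultimately show "1 / (k + 1) \<le> ln (k + 1) - ln k"
    using assms by (simp add: ln_div)
qed

lemma secant_slope_bounds:
  fixes k :: real
  assumes "k > 0"
  shows "k \<le> secant_slope k" and "secant_slope k \<le> k + 1"
proof -
  have "0 \<le> k * (k + 1)" using assms by simp
  from mult_left_mono[OF ln_succ_diff_bounds(1)[OF assms] this]
    mult_left_mono[OF ln_succ_diff_bounds(2)[OF assms] this]
  show "k \<le> secant_slope k" and "secant_slope k \<le> k + 1"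
    using assms unfolding secant_slope_def by simp_all
qed

lemma secant_slope_pos: "k > 0 \<Longrightarrow> secant_slope k > 0"
  using secant_slope_bounds(1)[of k] by linarith

lemma secant_gap_roots:
  fixes k :: real
  assumes "k > 0"
  shows "secant_gap k (1 / (k + 1)) = 0" and "secant_gap k (1 / k) = 0"
  using assms
  by (simp_all add: secant_gap_def secant_slope_def secant_offset_def ln_div field_simps)

lemma secant_gap_nonneg_below:
  fixes k q :: real
  assumes "k > 0" and "0 < q" and "q \<le> 1 / (k + 1)"
  shows "0 \<le> secant_gap k q"
proof -
  have "ln (q * (k + 1)) \<le> q * (k + 1) - 1"
    using assms by (intro ln_le_minus_one) auto
  then have ln_q: "ln q + ln (k + 1) \<le> q * (k + 1) - 1"
    using assms by (simp add: ln_mult)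
  have "0 \<le> (1 / (k + 1) - q) * ((k + 1) - secant_slope k)"
    using assms secant_slope_bounds[OF assms(1)] by simp
  also have "\<dots> = (1 - q * (k + 1)) - secant_slope k * (1 / (k + 1) - q)"
    using assms by (simp add: field_simps)
  also have "\<dots> \<le> - ln q - ln (k + 1) - secant_slope k * (1 / (k + 1) - q)"
    using ln_q by linarith
  also have "\<dots> = secant_gap k q - secant_gap k (1 / (k + 1))"
    using assms by (simp add: secant_gap_def ln_div algebra_simps)
  finally show ?thesis
    using secant_gap_roots(1)[OF assms(1)] by simp
qed

lemma secant_gap_nonneg_above:
  fixes k q :: real
  assumes "k > 0" and "1 / k \<le> q"
  shows "0 \<le> secant_gap k q"
proof -
  have "0 < 1 / k" using assms by simp
  then have q: "q > 0" using assms by linarith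
  have "ln (q * k) \<le> q * k - 1"
    using assms q by (intro ln_le_minus_one) auto
  then have ln_q: "ln q + ln k \<le> q * k - 1"
    using assms q by (simp add: ln_mult)
  have "0 \<le> (q - 1 / k) * (secant_slope k - k)"
    using assms secant_slope_bounds[OF assms(1)] by simp
  also have "\<dots> = (1 - q * k) + secant_slope k * (q - 1 / k)"
    using assms by (simp add: field_simps)
  also have "\<dots> \<le> - ln q - ln k + secant_slope k * (q - 1 / k)"
    using ln_q by linarith
  also have "\<dots> = secant_gap k q - secant_gap k (1 / k)"
    using assms q by (simp add: secant_gap_def ln_div algebra_simps)
  finally show ?thesis
    using secant_gap_roots(2)[OF assms(1)] by simp
qed

lemma secant_gap_antimono:
  fixes k u v :: real
  assumes "k > 0" and "0 < u" and "u \<le> v" and "v \<le> 1 / secant_slope k"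
  shows "secant_gap k v \<le> secant_gap k u"
proof -
  have v: "v > 0" using assms by linarith
  have "ln (u / v) \<le> u / v - 1"
    using assms v by (intro ln_le_minus_one) auto
  then have ln_uv: "ln u - ln v \<le> u / v - 1"
    using assms v by (simp add: ln_div)
  have "secant_slope k * v \<le> 1"
    using assms secant_slope_pos[OF assms(1)] by (simp add: field_simps)
  then have "secant_slope k * v * (v - u) \<le> 1 * (v - u)"
    using assms by (intro mult_right_mono) auto
  then have "secant_slope k * (v - u) \<le> (v - u) / v"
    using v by (simp add: pos_le_divide_eq mult_ac)
  moreover have "(v - u) / v = 1 - u / v"
    using v by (simp add: diff_divide_distrib)
  ultimately show ?thesis
    using ln_uv unfolding secant_gap_def by (simp add: algebra_simps)
qed

lemma secant_excess_zero [simp]: "secant_excess k 0 = 0"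
  by (simp add: secant_excess_def)

lemma secant_excess_subadditive:
  fixes k a b :: real
  assumes "k > 0" and "0 \<le> a" and "0 \<le> b" and "a + b \<le> 1 / secant_slope k"
  shows "secant_excess k (a + b) \<le> secant_excess k a + secant_excess k b"
proof (cases "a = 0 \<or> b = 0")
  case False
  then have "a > 0" and "b > 0" using assms by auto
  then have "a * secant_gap k (a + b) \<le> a * secant_gap k a"
    and "b * secant_gap k (a + b) \<le> b * secant_gap k b"
    using assms by (auto intro!: mult_left_mono secant_gap_antimono)
  then show ?thesis
    unfolding secant_excess_def by (simp add: distrib_right)
qed auto

lemma secant_excess_nonneg_below:
  assumes "k > 0" and "0 \<le> q" and "q \<le> 1 / (k + 1)"
  shows "0 \<le> secant_excess k q"
proof (cases "q = 0")
  case False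
  then show ?thesis
    using assms secant_gap_nonneg_below[OF assms(1), of q] by (simp add: secant_excess_def)
qed simp

lemma secant_excess_nonneg_above:
  assumes "k > 0" and "1 / k \<le> q"
  shows "0 \<le> secant_excess k q"
proof -
  have "0 < 1 / k" using assms by simp
  then have "0 < q" using assms by linarith
  then show ?thesis
    using secant_gap_nonneg_above[OF assms] by (simp add: secant_excess_def)
qed

lemma secant_excess_expand:
  "secant_excess k = (\<lambda>q. - (q * ln q) + secant_slope k * q\<^sup>2 - secant_offset k * q)"
  by (simp add: fun_eq_iff secant_excess_def secant_gap_def algebra_simps power2_eq_square)

definition secant_excess_deriv :: "real \<Rightarrow> real \<Rightarrow> real" where
  "secant_excess_deriv k q = - ln q - 1 + 2 * secant_slope k * q - secant_offset k"

lemma has_real_derivative_secant_excess: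
  "q > 0 \<Longrightarrow> (secant_excess k has_real_derivative secant_excess_deriv k q) (at q)"
  unfolding secant_excess_expand secant_excess_deriv_def
  by (auto intro!: derivative_eq_intros simp: algebra_simps)

lemma has_real_derivative_secant_excess_affine:
  assumes "0 < 1 - c * x"
  shows "((\<lambda>x. secant_excess k (1 - c * x)) has_real_derivative
    secant_excess_deriv k (1 - c * x) * (- c)) (at x)"
  using has_real_derivative_secant_excess[OF assms]
  by (rule DERIV_chain2[of "secant_excess k" _ "\<lambda>x. 1 - c * x"]) (auto intro!: derivative_eq_intros)

lemma convex_on_secant_excess:
  fixes k :: real
  assumes "k > 0"
  shows "convex_on {1 / (2 * secant_slope k)..} (secant_excess k)"
proof -
  have \<beta>: "secant_slope k > 0" using secant_slope_pos[OF assms] .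
  then have pos: "x > 0" if "x \<in> {1 / (2 * secant_slope k)..}" for x
    using that by (auto intro: order.strict_trans2[of 0 "1 / (2 * secant_slope k)"])
  show ?thesis
  proof (rule convex_on_realI[where f' = "secant_excess_deriv k"])
    fix x y assume xy: "x \<in> {1 / (2 * secant_slope k)..}" "y \<in> {1 / (2 * secant_slope k)..}" "x \<le> y"
    have x: "x > 0" using pos[OF xy(1)] .
    have "ln (y / x) \<le> y / x - 1"
      using x xy by (intro ln_le_minus_one) auto
    then have "ln y - ln x \<le> (y - x) / x"
      using x xy by (simp add: ln_div diff_divide_distrib)
    moreover have "1 / x \<le> 2 * secant_slope k"
      using x xy \<beta> by (simp add: field_simps)
    then have "(y - x) / x \<le> 2 * secant_slope k * (y - x)"
      using mult_right_mono[of "1 / x" "2 * secant_slope k" "y - x"] xy by simp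
    ultimately have "ln y - ln x \<le> 2 * secant_slope k * y - 2 * secant_slope k * x"
      by (simp add: algebra_simps)
    then show "secant_excess_deriv k x \<le> secant_excess_deriv k y"
      unfolding secant_excess_deriv_def by linarith
  qed (use pos has_real_derivative_secant_excess in auto)
qed

lemma continuous_on_mult_ln: "continuous_on {0..} (\<lambda>q::real. q * ln q)"
  unfolding continuous_on_def
proof
  fix x :: real assume x: "x \<in> {0..}"
  show "((\<lambda>q. q * ln q) \<longlongrightarrow> x * ln x) (at x within {0..})"
  proof (cases "x = 0")
    case True
    have "((\<lambda>q::real. q * ln q) \<longlongrightarrow> 0) (at_right 0)" by real_asymp
    then show ?thesis using True by (simp add: at_within_Ici_at_right)
  next
    case False
    then have "isCont (\<lambda>q. q * ln q) x" using x by (intro continuous_intros) auto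
    then show ?thesis by (simp add: isCont_def tendsto_within_subset[OF _ subset_UNIV])
  qed
qed

lemma continuous_on_secant_excess: "continuous_on {0..} (secant_excess k)"
  unfolding secant_excess_expand by (intro continuous_intros continuous_on_mult_ln)

lemma neg_persists_if_antimono_derivative:
  fixes f f' :: "real \<Rightarrow> real"
  assumes f': "\<And>x. a \<le> x \<Longrightarrow> x < b \<Longrightarrow> (f has_real_derivative f' x) (at x)"
    and antimono: "\<And>x z. a \<le> x \<Longrightarrow> x \<le> z \<Longrightarrow> z < b \<Longrightarrow> f' z \<le> f' x"
    and "f a = 0" and "a < u" and "u \<le> v" and "v < b" and "f u < 0"
  shows "f v < 0"
proof -
  have "\<exists>z. a < z \<and> z < u \<and> f u - f a = (u - a) * f' z"
    using assms by (intro MVT2[OF \<open>a < u\<close>] f') auto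
  then obtain \<eta> where \<eta>: "a < \<eta>" "\<eta> < u" "f u - f a = (u - a) * f' \<eta>"
    by blast
  then have "f' \<eta> < 0"
    using assms by (simp add: mult_less_0_iff)
  have "f v \<le> f u"
  proof (cases "u = v")
    case False
    then have "u < v" using assms by simp
    have "\<exists>z. u < z \<and> z < v \<and> f v - f u = (v - u) * f' z"
      using assms by (intro MVT2[OF \<open>u < v\<close>] f') auto
    then obtain \<theta> where \<theta>: "u < \<theta>" "\<theta> < v" "f v - f u = (v - u) * f' \<theta>"
      by blast
    have "f' \<theta> \<le> f' \<eta>"
      using antimono[of \<eta> \<theta>] \<eta> \<theta> assms by linarith
    then have "f' \<theta> \<le> 0" using \<open>f' \<eta> < 0\<close> by linarith
    then have "(v - u) * f' \<theta> \<le> 0"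
      using \<open>u < v\<close> by (intro mult_nonneg_nonpos) auto
    then show ?thesis using \<theta>(3) by linarith
  qed simp
  then show ?thesis using assms by linarith
qed

lemma nonneg_if_antimono_second_derivative:
  fixes F f f' :: "real \<Rightarrow> real" and a b y :: real
  assumes cont: "continuous_on {a..b} F"
    and F': "\<And>x. a \<le> x \<Longrightarrow> x < b \<Longrightarrow> (F has_real_derivative f x) (at x)"
    and f': "\<And>x. a \<le> x \<Longrightarrow> x < b \<Longrightarrow> (f has_real_derivative f' x) (at x)"
    and antimono: "\<And>x z. a \<le> x \<Longrightarrow> x \<le> z \<Longrightarrow> z < b \<Longrightarrow> f' z \<le> f' x"
    and "F a = 0" and "F b = 0" and "f a = 0"
    and "a \<le> y" and "y \<le> b"
  shows "0 \<le> F y"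
proof (rule ccontr)
  assume "\<not> 0 \<le> F y"
  then have Fy: "F y < 0" by simp
  have ay: "a < y" using \<open>a \<le> y\<close> \<open>F a = 0\<close> Fy by (cases "a = y") auto
  have yb: "y < b" using \<open>y \<le> b\<close> \<open>F b = 0\<close> Fy by (cases "y = b") auto
  have "\<exists>z. a < z \<and> z < y \<and> F y - F a = (y - a) * f z"
    using yb by (intro MVT2[OF ay] F') auto
  then obtain \<xi>\<^sub>1 where \<xi>\<^sub>1: "a < \<xi>\<^sub>1" "\<xi>\<^sub>1 < y" "F y - F a = (y - a) * f \<xi>\<^sub>1"
    by blast
  have "f \<xi>\<^sub>1 < 0"
    using \<xi>\<^sub>1 ay Fy \<open>F a = 0\<close> by (simp add: mult_less_0_iff)
  have "F differentiable (at x)" if "y < x" "x < b" for x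
    using F'[of x] that ay unfolding real_differentiable_def by auto
  moreover have "continuous_on {y..b} F"
    using ay by (intro continuous_on_subset[OF cont]) auto
  ultimately obtain l \<xi>\<^sub>2 where \<xi>\<^sub>2: "y < \<xi>\<^sub>2" "\<xi>\<^sub>2 < b"
      "(F has_real_derivative l) (at \<xi>\<^sub>2)" "F b - F y = (b - y) * l"
    using MVT[OF yb] by blast
  have "l = f \<xi>\<^sub>2"
    using DERIV_unique[OF \<xi>\<^sub>2(3) F'] \<xi>\<^sub>2 ay by simp
  moreover have "(b - y) * l > 0"
    using \<xi>\<^sub>2(4) Fy \<open>F b = 0\<close> by simp
  ultimately have f_pos: "f \<xi>\<^sub>2 > 0"
    using yb by (simp add: zero_less_mult_iff)
  have "\<xi>\<^sub>1 \<le> \<xi>\<^sub>2" using \<xi>\<^sub>1 \<xi>\<^sub>2 by linarith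
  then have "f \<xi>\<^sub>2 < 0"
    using neg_persists_if_antimono_derivative[OF f' antimono \<open>f a = 0\<close> \<xi>\<^sub>1(1) _ \<xi>\<^sub>2(2)
        \<open>f \<xi>\<^sub>1 < 0\<close>] by blast
  with f_pos show False by simp
qed

lemma inverse_plus_scaled_complement_mono:
  fixes k a b :: real
  assumes k: "k \<ge> 1" and a: "1 / (k + 1) \<le> a" and ab: "a \<le> b" and b: "b < 1 / k"
  shows "1 / a + k / (1 - k * a) \<le> 1 / b + k / (1 - k * b)"
proof -
  have "0 < 1 / (k + 1)" using k by simp
  then have a0: "a > 0" using a by linarith
  have b0: "b > 0" using a0 ab by linarith
  have kb: "k * b < 1" using b k by (simp add: field_simps)
  have "k * a \<le> k * b" using ab k by simp
  then have ka: "k * a < 1" using kb by linarith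
  \<comment> \<open>\<open>q \<ge> 1/(k+1) \<ge> 1/(2k)\<close> gives \<open>k q \<ge> 1 - k q\<close> at both points\<close>
  have "1 \<le> a * (k + 1)" using a k by (simp add: field_simps)
  moreover have "a * (k + 1) \<le> b * (k + 1)" using ab k by simp
  moreover have "a \<le> k * a" and "b \<le> k * b" using k a0 b0 by simp_all
  ultimately have "k * a \<ge> 1 - k * a" and "k * b \<ge> 1 - k * b"
    by (simp_all add: algebra_simps)
  then have "(1 - k * a) * (1 - k * b) \<le> (k * a) * (k * b)"
    using ka kb a0 k by (intro mult_mono) auto
  then have "(k * k) / ((k * a) * (k * b)) \<le> (k * k) / ((1 - k * a) * (1 - k * b))"
    using a0 b0 k ka kb by (intro divide_left_mono) auto
  moreover have "(k * k) / ((k * a) * (k * b)) = 1 / (a * b)"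
    using k by (simp add: field_simps)
  ultimately have "1 / (a * b) \<le> (k * k) / ((1 - k * a) * (1 - k * b))"
    by simp
  then have "(b - a) * (1 / (a * b)) \<le> (b - a) * ((k * k) / ((1 - k * a) * (1 - k * b)))"
    using ab by (intro mult_left_mono) auto
  moreover have "1 / a - 1 / b = (b - a) * (1 / (a * b))"
    using a0 b0 by (simp add: field_simps)
  moreover have "k / (1 - k * b) - k / (1 - k * a) = (b - a) * ((k * k) / ((1 - k * a) * (1 - k * b)))"
    using ka kb by (simp add: field_simps)
  ultimately have "1 / a - 1 / b \<le> k / (1 - k * b) - k / (1 - k * a)"
    by simp
  then show ?thesis by simp
qed

lemma secant_excess_two_level_nonneg:
  fixes k y :: real
  assumes k: "k \<ge> 1" and "1 / (k + 1) \<le> y" and "y \<le> 1 / k"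
  shows "0 \<le> k * secant_excess k y + secant_excess k (1 - k * y)"
proof -
  define F where "F = (\<lambda>y. k * secant_excess k y + secant_excess k (1 - k * y))"
  define f where "f = (\<lambda>y. k * (secant_excess_deriv k y - secant_excess_deriv k (1 - k * y)))"
  define f' where "f' = (\<lambda>y. k * (2 * secant_slope k * (1 + k) - (1 / y + k / (1 - k * y))))"
  have k0: "k > 0" using k by simp
  have pos: "0 < x" "0 < 1 - k * x" if "1 / (k + 1) \<le> x" "x < 1 / k" for x
    using that k0 by (auto simp: field_simps intro: order.strict_trans2[rotated])
  have "0 \<le> F y"
  proof (rule nonneg_if_antimono_second_derivative[where F = F and f = f and f' = f'
        and a = "1 / (k + 1)" and b = "1 / k"])
    have "continuous_on {1 / (k + 1)..1 / k} (secant_excess k)"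
      using k0 by (intro continuous_on_subset[OF continuous_on_secant_excess]) auto
    moreover have "continuous_on {1 / (k + 1)..1 / k} (\<lambda>x. secant_excess k (1 - k * x))"
      using k0 by (intro continuous_on_compose2[OF continuous_on_secant_excess] continuous_intros)
        (auto simp: field_simps)
    ultimately show "continuous_on {1 / (k + 1)..1 / k} F"
      unfolding F_def by (intro continuous_intros)
  next
    fix x assume x: "1 / (k + 1) \<le> x" "x < 1 / k"
    note has_real_derivative_secant_excess_affine[OF pos(2)[OF x]]
    then show "(F has_real_derivative f x) (at x)"
      unfolding F_def f_def
      by (auto intro!: derivative_eq_intros has_real_derivative_secant_excess pos x
          simp: algebra_simps)
    show "(f has_real_derivative f' x) (at x)"
      unfolding f_def f'_def secant_excess_deriv_def
      using pos[OF x]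
      by (auto intro!: derivative_eq_intros simp: field_simps)
  next
    fix x z assume "1 / (k + 1) \<le> x" "x \<le> z" "z < 1 / k"
    then have "1 / x + k / (1 - k * x) \<le> 1 / z + k / (1 - k * z)"
      by (rule inverse_plus_scaled_complement_mono[OF k])
    then show "f' z \<le> f' x"
      unfolding f'_def by (intro mult_left_mono) (use k0 in auto)
  next
    have "1 - k * (1 / (k + 1)) = 1 / (k + 1)"
      using k0 by (simp add: field_simps)
    then show "F (1 / (k + 1)) = 0" and "f (1 / (k + 1)) = 0"
      unfolding F_def f_def secant_excess_def using secant_gap_roots(1)[OF k0] by simp_all
    show "F (1 / k) = 0"
      unfolding F_def secant_excess_def using secant_gap_roots(2)[OF k0] k0 by simp
  qed (use assms in auto)
  then show ?thesis unfolding F_def .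
qed

lemma secant_excess_balanced_nonneg:
  fixes K n :: nat and x y :: real
  assumes K: "K \<ge> 1" and n: "n \<ge> 1" and "0 \<le> x" and x_small: "x \<le> 1 / (real K + 1)"
    and "x \<le> y" and total: "x + n * y = 1"
  shows "0 \<le> n * secant_excess K y + secant_excess K x"
proof -
  have k0: "real K > 0" using K by simp
  have "1 \<le> (n + 1) * y" using assms by (simp add: algebra_simps)
  then have y_lower: "1 / (real n + 1) \<le> y" by (simp add: field_simps)
  have "n * y \<le> 1" using assms by linarith
  then have y_upper: "y \<le> 1 / n" using n by (simp add: field_simps)
  have hx: "0 \<le> secant_excess K x"
    by (rule secant_excess_nonneg_below[OF k0 \<open>0 \<le> x\<close> x_small])
  consider "n = K" | "K < n" | "n < K" by linarith
  then show ?thesis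
  proof cases
    case 1
    then have "x = 1 - K * y" using total by simp
    then show ?thesis
      using secant_excess_two_level_nonneg[of K y] 1 K y_lower y_upper by simp
  next
    case 2
    then have "1 / real n \<le> 1 / (real K + 1)" by (intro frac_le) auto
    then have "0 \<le> secant_excess K y"
      using k0 y_upper assms(3,5) by (intro secant_excess_nonneg_below) auto
    then show ?thesis using hx by simp
  next
    case 3
    then have "1 / real K \<le> 1 / (real n + 1)" by (intro frac_le) auto
    then have "0 \<le> secant_excess K y"
      using k0 y_lower by (intro secant_excess_nonneg_above) auto
    then show ?thesis using hx by simp
  qed
qed

lemma sum_comp_merge_pair:
  fixes f :: "'a \<Rightarrow> 'b::ab_group_add" and g :: "'b \<Rightarrow> 'c::ab_group_add"
  assumes "finite A" and "i \<in> A" and "j \<in> A" and "i \<noteq> j"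
  shows "(\<Sum>l\<in>A. g (f l))
    = (\<Sum>l\<in>A - {j}. g ((f(i := f i + f j)) l)) + (g (f i) + g (f j) - g (f i + f j))"
proof -
  have "(\<Sum>l\<in>A - {j}. g ((f(i := f i + f j)) l)) = g (f i + f j) + (\<Sum>l\<in>A - {j} - {i}. g (f l))"
    using assms by (simp add: sum.remove[of "A - {j}" i])
  moreover have "(\<Sum>l\<in>A. g (f l)) = g (f j) + (g (f i) + (\<Sum>l\<in>A - {j} - {i}. g (f l)))"
    using assms by (simp add: sum.remove[of A j] sum.remove[of "A - {j}" i])
  ultimately show ?thesis by (simp add: algebra_simps)
qed

lemma convex_on_card_mult_mean_le:
  fixes h :: "real \<Rightarrow> real"
  assumes "convex_on D h" and "finite S" and "S \<noteq> {}" and "\<And>i. i \<in> S \<Longrightarrow> f i \<in> D"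
  shows "card S * h (sum f S / card S) \<le> (\<Sum>i\<in>S. h (f i))"
proof -
  have n: "real (card S) > 0" using assms by (simp add: card_gt_0_iff)
  have "h (\<Sum>i\<in>S. (1 / card S) *\<^sub>R f i) \<le> (\<Sum>i\<in>S. (1 / card S) * h (f i))"
    using n by (intro convex_on_sum[OF assms(2,3,1)] assms(4)) auto
  then have "h (sum f S / card S) \<le> (\<Sum>i\<in>S. h (f i)) / card S"
    by (simp add: sum_divide_distrib)
  then show ?thesis using n by (simp add: field_simps)
qed

lemma secant_excess_sum_nonneg_one_small:
  fixes K :: nat and f :: "'a \<Rightarrow> real"
  assumes K: "K \<ge> 1" and "finite S"
    and large: "\<And>i. i \<in> S \<Longrightarrow> 1 / (2 * secant_slope K) < f i"
    and x_nonneg: "0 \<le> x" and x_small: "x \<le> 1 / (2 * secant_slope K)"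
    and total: "sum f S + x = 1"
  shows "0 \<le> (\<Sum>i\<in>S. secant_excess K (f i)) + secant_excess K x"
proof -
  define s where "s = 1 / (2 * secant_slope K)"
  define y where "y = (1 - x) / card S"
  have k0: "real K > 0" using K by simp
  have "real K + 1 \<le> 2 * secant_slope K" using secant_slope_bounds(1)[OF k0] K by linarith
  then have s_small: "s \<le> 1 / (real K + 1)" unfolding s_def by (intro frac_le) auto
  have "S \<noteq> {}"
  proof
    assume "S = {}"
    then have "x = 1" using total by simp
    moreover have "1 / (real K + 1) < 1" using k0 by simp
    ultimately show False using x_small s_small unfolding s_def by linarith
  qed
  then have n: "card S \<ge> 1" using \<open>finite S\<close> by (simp add: Suc_le_eq card_gt_0_iff)
  have "card S * s \<le> sum f S"
    using sum_mono[of S "\<lambda>_. s" f] large unfolding s_def by force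
  moreover have "card S * x \<le> card S * s"
    using x_small unfolding s_def by (intro mult_left_mono) simp_all
  ultimately have "card S * x \<le> 1 - x" using total by linarith
  then have "x \<le> y" using n unfolding y_def by (simp add: pos_le_divide_eq mult.commute)
  moreover have "x + card S * y = 1" using n by (simp add: y_def)
  ultimately have "0 \<le> card S * secant_excess K y + secant_excess K x"
    using x_nonneg x_small s_small unfolding s_def
    by (intro secant_excess_balanced_nonneg[OF K n]) auto
  moreover have "card S * secant_excess K y \<le> (\<Sum>i\<in>S. secant_excess K (f i))"
  proof -
    have "y = sum f S / card S" unfolding y_def using total by (simp add: algebra_simps)
    then show ?thesis
      using \<open>S \<noteq> {}\<close> \<open>finite S\<close> large
      by (auto intro!: convex_on_card_mult_mean_le[OF convex_on_secant_excess[OF k0]]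
          intro: less_imp_le)
  qed
  ultimately show ?thesis by simp
qed

lemma secant_excess_sum_nonneg_spread:
  fixes K :: nat and f :: "'a \<Rightarrow> real"
  assumes K: "K \<ge> 1" and "finite A" and nonneg: "\<And>i. i \<in> A \<Longrightarrow> 0 \<le> f i"
    and total: "sum f A = 1"
    and spread: "\<And>i j. i \<in> A \<Longrightarrow> j \<in> A \<Longrightarrow> i \<noteq> j \<Longrightarrow> 1 / secant_slope K < f i + f j"
  shows "0 \<le> (\<Sum>i\<in>A. secant_excess K (f i))"
proof -
  define s where "s = 1 / (2 * secant_slope K)"
  define S where "S = {i \<in> A. s < f i}"
  have s_pos: "0 < s" unfolding s_def using secant_slope_pos[of K] K by simp
  have small: "f i \<le> s" if "i \<in> A - S" for i
    using that by (auto simp: S_def)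
  have "i = j" if "i \<in> A - S" "j \<in> A - S" for i j
    using spread[of i j] small[OF that(1)] small[OF that(2)] that unfolding s_def by force
  then consider "A - S = {}" | t where "A - S = {t}" by blast
  then have "0 \<le> sum f (A - S) \<and> sum f (A - S) \<le> s
    \<and> (\<Sum>i\<in>A - S. secant_excess K (f i)) = secant_excess K (sum f (A - S))"
  proof cases
    case 1
    then show ?thesis unfolding 1 using s_pos by simp
  next
    case (2 t)
    then have "t \<in> A" and "f t \<le> s" using small by auto
    then show ?thesis using 2 nonneg by simp
  qed
  moreover have split: "sum g A = sum g S + sum g (A - S)" for g :: "'a \<Rightarrow> real"
    using \<open>finite A\<close> by (simp add: S_def sum.subset_diff[of S A])
  moreover have "0 \<le> (\<Sum>i\<in>S. secant_excess K (f i)) + secant_excess K (sum f (A - S))"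
    using calculation total \<open>finite A\<close>
    by (intro secant_excess_sum_nonneg_one_small[OF K]) (auto simp: S_def s_def)
  ultimately show ?thesis by simp
qed

lemma secant_excess_sum_nonneg:
  fixes K :: nat and f :: "'a \<Rightarrow> real"
  assumes K: "K \<ge> 1"
  shows "finite A \<Longrightarrow> (\<And>i. i \<in> A \<Longrightarrow> 0 \<le> f i) \<Longrightarrow> sum f A = 1
    \<Longrightarrow> 0 \<le> (\<Sum>i\<in>A. secant_excess K (f i))"
proof (induction "card A" arbitrary: A f rule: less_induct)
  case less
  show ?case
  proof (cases "\<exists>i\<in>A. \<exists>j\<in>A. i \<noteq> j \<and> f i + f j \<le> 1 / secant_slope K")
    case True
    then obtain i j where ij: "i \<in> A" "j \<in> A" "i \<noteq> j" "f i + f j \<le> 1 / secant_slope K"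
      by blast
    have "0 \<le> (\<Sum>l\<in>A - {j}. secant_excess K ((f(i := f i + f j)) l))"
    proof (rule less.hyps)
      show "card (A - {j}) < card A" using less.prems(1) ij(2) by (rule card_Diff1_less)
      show "sum (f(i := f i + f j)) (A - {j}) = 1"
        using sum_comp_merge_pair[OF less.prems(1) ij(1-3), where f = f and g = "\<lambda>x. x"] less.prems by simp
    qed (use less.prems ij in auto)
    moreover have "secant_excess K (f i + f j) \<le> secant_excess K (f i) + secant_excess K (f j)"
      using K less.prems ij by (intro secant_excess_subadditive) auto
    ultimately show ?thesis
      using sum_comp_merge_pair[OF less.prems(1) ij(1-3), where f = f and g = "secant_excess K"] by simp
  next
    case False
    then have "1 / secant_slope K < f i + f j" if "i \<in> A" "j \<in> A" "i \<noteq> j" for i j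
      using that by (auto simp: not_le)
    then show ?thesis
      using less.prems by (intro secant_excess_sum_nonneg_spread[OF K]) auto
  qed
qed

lemma shannon_mult_ln2: "shannon p * ln 2 = (\<Sum>i\<in>UNIV. - (p i * ln (p i)))"
proof -
  have "(if p i = 0 then 0 else p i * log 2 (p i)) = p i * ln (p i) / ln 2" for i
    by (simp add: log_def)
  then show ?thesis
    by (simp add: shannon_def sum_divide_distrib[symmetric] sum_negf)
qed

lemma shannon_ge_secant:
  fixes p :: "'n::finite \<Rightarrow> real" and K :: nat
  assumes nonneg: "\<And>i. 0 \<le> p i" and total: "(\<Sum>i\<in>UNIV. p i) = 1"
  shows "secant_offset K - secant_slope K * (\<Sum>i\<in>UNIV. (p i)\<^sup>2) \<le> shannon p * ln 2"
proof (cases "K = 0")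
  case True
  have "p i \<le> 1" for i
    using member_le_sum[of i UNIV p] nonneg total by simp
  then have "0 \<le> - (p i * ln (p i))" for i
    using nonneg[of i] by (cases "p i = 0") (auto simp: mult_nonneg_nonpos)
  then have "0 \<le> shannon p * ln 2"
    unfolding shannon_mult_ln2 by (intro sum_nonneg)
  then show ?thesis
    using True by (simp add: secant_offset_def secant_slope_def)
next
  case False
  have "0 \<le> (\<Sum>i\<in>UNIV. secant_excess K (p i))"
    using False nonneg total by (intro secant_excess_sum_nonneg) auto
  also have "\<dots> = shannon p * ln 2 + secant_slope K * (\<Sum>i\<in>UNIV. (p i)\<^sup>2) - secant_offset K"
    using total
    by (simp add: secant_excess_expand shannon_mult_ln2 sum.distrib sum_subtractf sum_negf
        sum_distrib_left[symmetric] sum_distrib_right[symmetric])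
  finally show ?thesis by simp
qed

lemma sum_shannon_ge_secant:
  fixes p :: "nat \<Rightarrow> 'n::finite \<Rightarrow> real" and K M :: nat
  assumes "\<And>m i. m < M \<Longrightarrow> 0 \<le> p m i" and "\<And>m. m < M \<Longrightarrow> (\<Sum>i\<in>UNIV. p m i) = 1"
    and "(\<Sum>m<M. \<Sum>i\<in>UNIV. (p m i)\<^sup>2) \<le> C"
  shows "M * secant_offset K - secant_slope K * C \<le> (\<Sum>m<M. shannon (p m)) * ln 2"
proof -
  have "0 \<le> secant_slope K"
    using secant_slope_pos[of K] by (cases "K = 0") (auto simp: secant_slope_def)
  then have "secant_slope K * (\<Sum>m<M. \<Sum>i\<in>UNIV. (p m i)\<^sup>2) \<le> secant_slope K * C"
    using assms(3) by (rule mult_left_mono[rotated])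
  moreover have "(\<Sum>m<M. secant_offset K - secant_slope K * (\<Sum>i\<in>UNIV. (p m i)\<^sup>2))
      \<le> (\<Sum>m<M. shannon (p m) * ln 2)"
    using assms(1,2) by (intro sum_mono shannon_ge_secant) auto
  ultimately show ?thesis
    by (simp add: sum_subtractf sum_distrib_left sum_distrib_right)
qed

lemma secant_bound_mult_ln2:
  fixes k x C :: real
  shows "((x - k) * C * (k + 1) * log 2 (k + 1) + (1 - (x - k)) * C * k * log 2 k) * ln 2
    = x * C * secant_offset k - secant_slope k * C"
proof -
  have log_ln: "log 2 t * ln 2 = ln t" for t :: real
    by (simp add: log_def)
  have "((x - k) * C * (k + 1) * log 2 (k + 1) + (1 - (x - k)) * C * k * log 2 k) * ln 2
      = (x - k) * C * (k + 1) * (log 2 (k + 1) * ln 2) + (1 - (x - k)) * C * k * (log 2 k * ln 2)"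
    by (simp add: algebra_simps)
  also have "\<dots> = x * C * secant_offset k - secant_slope k * C"
    unfolding log_ln by (simp add: secant_offset_def secant_slope_def algebra_simps)
  finally show ?thesis .
qed

lemma orthonormal_basis_completeness:
  fixes b :: "'n::finite \<Rightarrow> complex ^ 'n"
  assumes "orthonormal_basis b"
  shows "(\<Sum>i\<in>UNIV. b i $ l * cnj (b i $ j)) = (if l = j then 1 else 0)"
proof -
  define U :: "complex ^ 'n ^ 'n" where "U = (\<chi> j i. b i $ j)"
  define W :: "complex ^ 'n ^ 'n" where "W = (\<chi> i j. cnj (b i $ j))"
  have "W ** U = mat 1"
    using assms unfolding orthonormal_basis_def cinner_def
    by (simp add: U_def W_def matrix_matrix_mult_def mat_def vec_eq_iff)
  then have "U ** W = mat 1" using matrix_left_right_inverse by blast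
  then have "(U ** W) $ l $ j = mat 1 $ l $ j" by simp
  then show ?thesis by (simp add: U_def W_def matrix_matrix_mult_def mat_def)
qed

lemma outcome_prob_nonneg: "density_op \<rho> \<Longrightarrow> 0 \<le> outcome_prob \<rho> b i"
  unfolding density_op_def outcome_prob_def by blast

lemma sum_outcome_prob:
  fixes \<rho> :: "complex ^ 'n ^ 'n" and b :: "'n \<Rightarrow> complex ^ 'n"
  assumes "density_op \<rho>" and "orthonormal_basis b"
  shows "(\<Sum>i\<in>UNIV. outcome_prob \<rho> b i) = 1"
proof -
  have "(\<Sum>i\<in>UNIV. cinner (b i) (\<rho> *v b i))
      = (\<Sum>i\<in>UNIV. \<Sum>j\<in>UNIV. \<Sum>l\<in>UNIV. \<rho> $ j $ l * (b i $ l * cnj (b i $ j)))"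
    unfolding cinner_def matrix_vector_mult_def by (simp add: sum_distrib_left mult_ac)
  also have "\<dots> = (\<Sum>j\<in>UNIV. \<Sum>l\<in>UNIV. \<rho> $ j $ l * (\<Sum>i\<in>UNIV. b i $ l * cnj (b i $ j)))"
    by (simp add: sum_distrib_left) (subst sum.swap, rule sum.cong, simp, subst sum.swap, simp)
  also have "\<dots> = (\<Sum>j\<in>UNIV. \<rho> $ j $ j)"
    by (simp add: orthonormal_basis_completeness[OF assms(2)] if_distrib cong: if_cong)
  also have "\<dots> = 1" using assms(1) unfolding density_op_def by blast
  finally show ?thesis
    unfolding outcome_prob_def by (metis Re_sum one_complex.sel)
qed

theorem theorem2:
  fixes \<rho> :: "complex ^ 'n ^ 'n"
    and B :: "nat \<Rightarrow> 'n \<Rightarrow> complex ^ 'n"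
    and M :: nat and C :: real
  assumes "CARD('n) \<ge> 2"
    and "density_op \<rho>"
    and "mutually_unbiased M B"
    and "C > 0"
    and "(\<Sum>m<M. \<Sum>i\<in>UNIV. (outcome_prob \<rho> (B m) i)\<^sup>2) \<le> C"
  shows "(let K = real_of_int \<lfloor>real M / C\<rfloor>; a = real M / C - K
          in a * C * (K + 1) * log 2 (K + 1) + (1 - a) * C * K * log 2 K)
         \<le> (\<Sum>m<M. shannon (outcome_prob \<rho> (B m)))"
proof -
  define K where "K = nat \<lfloor>real M / C\<rfloor>"
  have K: "real_of_int \<lfloor>real M / C\<rfloor> = real K"
    unfolding K_def using assms(4) by simp
  have onb: "orthonormal_basis (B m)" if "m < M" for m
    using assms(3) that unfolding mutually_unbiased_def by blast
  have "(let K = real_of_int \<lfloor>real M / C\<rfloor>; a = real M / C - K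
          in a * C * (K + 1) * log 2 (K + 1) + (1 - a) * C * K * log 2 K) * ln 2
      = M * secant_offset K - secant_slope K * C"
    using secant_bound_mult_ln2[of "real M / C" K C] assms(4) by (simp add: K Let_def)
  also have "\<dots> \<le> (\<Sum>m<M. shannon (outcome_prob \<rho> (B m))) * ln 2"
    using assms(2,5) onb by (intro sum_shannon_ge_secant outcome_prob_nonneg sum_outcome_prob)
  finally show ?thesis by simp
qed

end
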